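(* There is an absolute constant $c>0$ such that the following holds. Let $\mathbf T$ be a size-$s$ stochastic decision tree over $\{0,1\}^n$. For every $\varepsilon\in(0,1/2)$ there is a stochastic-leaf decision tree $\overline{\mathbf T}$ of size $S\le s^{c/\varepsilon^2}$ such that $\mathbb{E}_{\mathbf x}\big[|\mu_{\mathbf T}(\mathbf x)-\mu_{\overline{\mathbf T}}(\mathbf x)|\big]\le\varepsilon$, where $\mathbf x$ is uniform on $\{0,1\}^n$.
   Context: A stochastic decision tree (DT) $\mathbf{T}$ over $\{0,1\}^n$ is a rooted binary tree whose internal nodes are either deterministic nodes, each labeled by a variable $x_i$ ($i\in[n]$) with one outgoing edge followed when $x_i=0$ and one when $x_i=1$, or stochastic nodes, each with two outgoing edges followed with probabilities $p$ and $1-p$ (for a node-specific $p\in[0,1]$, using fresh independent randomness at each node), and whose leaves are labeled $0$ or $1$. On input $x$, $\mathbf{T}(x)$ is the (random) label of the leaf reached. The size of a DT is its number of leaves. A stochastic-leaf DT is a stochastic DT in which every stochastic node has only leaves as its children. The mean function of $\mathbf T$ is $\mu_{\mathbf T}(x)=\Pr[\mathbf T(x)=1]$. *)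

theory Defs
  imports Complex_Main
begin

text \<open>Inputs are bit lists of length n;
  Query i l r follows l when bit i is 0 (False) and r when it is 1 (True).\<close>

datatype sdt = Leaf bool | Query nat sdt sdt | Stoch real sdt sdt

fun wf_sdt :: "nat \<Rightarrow> sdt \<Rightarrow> bool" where
  "wf_sdt n (Leaf b) = True"
| "wf_sdt n (Query i l r) = (i < n \<and> wf_sdt n l \<and> wf_sdt n r)"
| "wf_sdt n (Stoch p l r) = (0 \<le> p \<and> p \<le> 1 \<and> wf_sdt n l \<and> wf_sdt n r)"

fun sdt_size :: "sdt \<Rightarrow> nat" where
  "sdt_size (Leaf b) = 1"
| "sdt_size (Query i l r) = sdt_size l + sdt_size r"
| "sdt_size (Stoch p l r) = sdt_size l + sdt_size r"

fun is_leaf :: "sdt \<Rightarrow> bool" where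
  "is_leaf (Leaf b) = True"
| "is_leaf _ = False"

fun stoch_leaf :: "sdt \<Rightarrow> bool" where
  "stoch_leaf (Leaf b) = True"
| "stoch_leaf (Query i l r) = (stoch_leaf l \<and> stoch_leaf r)"
| "stoch_leaf (Stoch p l r) = (is_leaf l \<and> is_leaf r)"

fun mu :: "sdt \<Rightarrow> bool list \<Rightarrow> real" where
  "mu (Leaf b) x = (if b then 1 else 0)"
| "mu (Query i l r) x = (if x ! i then mu r x else mu l x)"
| "mu (Stoch p l r) x = p * mu l x + (1 - p) * mu r x"

definition cube :: "nat \<Rightarrow> bool list set" where
  "cube n = {x. length x = n}"

definition unif_exp :: "nat \<Rightarrow> (bool list \<Rightarrow> real) \<Rightarrow> real" where
  "unif_exp n f = (\<Sum>x\<in>cube n. f x) / 2 ^ n"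

end

theory Submission
  imports Defs
begin

text \<open>Resolving every stochastic node of \<open>T\<close> writes \<open>\<mu>\<^sub>T\<close> as a convex combination of the mean
  functions of deterministic trees of size at most \<open>s\<close>. By Maurey's empirical method the average
  of \<open>k = \<lceil>1/\<epsilon>\<^sup>2\<rceil>\<close> well-chosen trees from this mixture is within \<open>1/k \<le> \<epsilon>\<^sup>2\<close> of \<open>\<mu>\<^sub>T\<close> in mean
  square, hence within \<open>\<epsilon>\<close> in mean absolute value. Such an average is computed by running the
  \<open>k\<close> trees one after another, counting the \<open>1\<close>-leaves reached, and finishing with a single
  stochastic leaf; this tree has at most \<open>2 s\<^sup>k \<le> s\<^bsup>2/\<epsilon>\<^sup>2\<^esup>\<close> leaves.\<close>

definition wexp :: "(real \<times> 'a) list \<Rightarrow> ('a \<Rightarrow> real) \<Rightarrow> real" where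
  "wexp D f = sum_list (map (\<lambda>(w, t). w * f t) D)"

lemma wexp_Nil [simp]: "wexp [] f = 0"
  by (simp add: wexp_def)

lemma wexp_Cons [simp]: "wexp ((w, t) # D) f = w * f t + wexp D f"
  by (simp add: wexp_def)

lemma wexp_append [simp]: "wexp (D @ D') f = wexp D f + wexp D' f"
  by (simp add: wexp_def)

lemma wexp_scale_weights: "wexp (map (\<lambda>(w, t). (c * w, t)) D) f = c * wexp D f"
  by (induction D) (auto simp: algebra_simps)

lemma wexp_product:
  "wexp (concat (map (\<lambda>(p, a). map (\<lambda>(q, b). (p * q, F a b)) R) L)) f =
     wexp L (\<lambda>a. wexp R (\<lambda>b. f (F a b)))"
proof -
  have inner: "wexp (map (\<lambda>(q, b). (p * q, F a b)) R) f = p * wexp R (\<lambda>b. f (F a b))" for p a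
    by (induction R) (auto simp: algebra_simps)
  show ?thesis
    by (induction L) (auto simp: inner)
qed

lemma wexp_add: "wexp D (\<lambda>t. f t + g t) = wexp D f + wexp D g"
  by (induction D) (auto simp: algebra_simps)

lemma wexp_diff: "wexp D (\<lambda>t. f t - g t) = wexp D f - wexp D g"
  by (induction D) (auto simp: algebra_simps)

lemma wexp_cmult: "wexp D (\<lambda>t. c * f t) = c * wexp D f"
  by (induction D) (auto simp: algebra_simps)

lemma wexp_const: "wexp D (\<lambda>_. c) = c * wexp D (\<lambda>_. 1)"
  by (induction D) (auto simp: algebra_simps)

lemma wexp_sum: "wexp D (\<lambda>t. \<Sum>x\<in>A. F x t) = (\<Sum>x\<in>A. wexp D (F x))"
  by (induction D) (auto simp: sum_distrib_left sum.distrib)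

lemma wexp_mono:
  "\<forall>y\<in>set D. 0 \<le> fst y \<and> f (snd y) \<le> g (snd y) \<Longrightarrow> wexp D f \<le> wexp D g"
  by (induction D) (auto intro!: add_mono mult_left_mono)

lemma wexp_exists_le:
  assumes nonneg: "\<forall>y\<in>set D. 0 \<le> fst y" and total: "wexp D (\<lambda>_. 1) = 1"
  shows "\<exists>y\<in>set D. f (snd y) \<le> wexp D f"
proof -
  let ?S = "snd ` set D"
  have "D \<noteq> []" using total by auto
  then obtain t where t: "t \<in> ?S" "f t = Min (f ` ?S)"
    by (metis (no_types, lifting) Min_in empty_is_image finite_imageI finite_set imageE set_empty)
  have "f t = wexp D (\<lambda>_. f t)"
    by (simp add: wexp_const[of D "f t"] total)
  also have "\<dots> \<le> wexp D f"
    using nonneg t by (intro wexp_mono) auto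
  finally show ?thesis using t(1) by auto
qed

lemma wexp_shifted_square_le:
  assumes nonneg: "\<forall>y\<in>set D. 0 \<le> fst y" and total: "wexp D (\<lambda>_. 1) = 1"
    and mean: "wexp D f = m" and close: "\<forall>y\<in>set D. \<bar>m - f (snd y)\<bar> \<le> 1"
  shows "wexp D (\<lambda>t. (h + (m - f t))\<^sup>2) \<le> h\<^sup>2 + 1"
proof -
  have expand: "(h + (m - f t))\<^sup>2 = (h\<^sup>2 + 2 * h * m) * 1 - (2 * h) * f t + (m - f t)\<^sup>2" for t
    by (simp add: power2_eq_square algebra_simps)
  have "wexp D (\<lambda>t. (h + (m - f t))\<^sup>2) = h\<^sup>2 + wexp D (\<lambda>t. (m - f t)\<^sup>2)"
    unfolding expand by (simp only: wexp_add wexp_diff wexp_cmult) (simp add: total mean)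
  also have "wexp D (\<lambda>t. (m - f t)\<^sup>2) \<le> wexp D (\<lambda>_. 1)"
    using nonneg close by (intro wexp_mono) (simp add: abs_square_le_1)
  finally show ?thesis using total by simp
qed

text \<open>Maurey's empirical method, derandomised: a sample drawn from \<open>D\<close> one element at a time,
  each time choosing an element that does at least as well as a random one, has the squared
  error of a random sample of size \<open>k\<close>, namely at most \<open>k\<close> per point.\<close>

lemma greedy_empirical_approximation:
  fixes D :: "(real \<times> 'a) list" and f :: "'a \<Rightarrow> 'x \<Rightarrow> real"
  assumes fin: "finite N" and nonneg: "\<forall>y\<in>set D. 0 \<le> fst y" and total: "wexp D (\<lambda>_. 1) = 1"
    and mean: "\<forall>x\<in>N. wexp D (\<lambda>t. f t x) = g x"
    and close: "\<forall>y\<in>set D. \<forall>x\<in>N. \<bar>g x - f (snd y) x\<bar> \<le> 1"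
  shows "\<exists>ts. length ts = k \<and> set ts \<subseteq> snd ` set D \<and>
     (\<Sum>x\<in>N. (real k * g x - sum_list (map (\<lambda>t. f t x) ts))\<^sup>2) \<le> real k * card N"
proof (induction k)
  case 0
  show ?case by simp
next
  case (Suc k)
  then obtain ts where ts: "length ts = k" "set ts \<subseteq> snd ` set D"
    "(\<Sum>x\<in>N. (real k * g x - sum_list (map (\<lambda>t. f t x) ts))\<^sup>2) \<le> real k * card N"
    by blast
  define h where "h x = real k * g x - sum_list (map (\<lambda>t. f t x) ts)" for x
  define err where "err t = (\<Sum>x\<in>N. (h x + (g x - f t x))\<^sup>2)" for t
  obtain y where y: "y \<in> set D" "err (snd y) \<le> wexp D err"
    using wexp_exists_le[OF nonneg total] by blast
  have "wexp D err = (\<Sum>x\<in>N. wexp D (\<lambda>t. (h x + (g x - f t x))\<^sup>2))"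
    unfolding err_def by (rule wexp_sum)
  also have "\<dots> \<le> (\<Sum>x\<in>N. (h x)\<^sup>2 + 1)"
    using mean close by (intro sum_mono wexp_shifted_square_le[OF nonneg total]) auto
  also have "\<dots> \<le> real (Suc k) * card N"
    using ts(3) by (simp add: sum.distrib h_def algebra_simps)
  finally have "err (snd y) \<le> real (Suc k) * card N"
    using y(2) by linarith
  moreover have "err (snd y) =
      (\<Sum>x\<in>N. (real (Suc k) * g x - sum_list (map (\<lambda>t. f t x) (snd y # ts)))\<^sup>2)"
    unfolding err_def h_def by (intro sum.cong) (auto simp: algebra_simps)
  ultimately show ?case
    using ts y(1) by (intro exI[of _ "snd y # ts"]) auto
qed

lemma cube_eq_lists: "cube n = {xs. set xs \<subseteq> (UNIV :: bool set) \<and> length xs = n}"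
  by (auto simp: cube_def)

lemma finite_cube: "finite (cube n)"
  unfolding cube_eq_lists by (rule finite_lists_length_eq) simp

lemma card_cube: "card (cube n) = 2 ^ n"
  using card_lists_length_eq[of "UNIV :: bool set" n] by (simp add: cube_def)

lemma unif_exp_abs_le_of_square_le:
  assumes eps: "0 < \<epsilon>" and sq: "unif_exp n (\<lambda>x. (d x)\<^sup>2) \<le> \<epsilon>\<^sup>2"
  shows "unif_exp n (\<lambda>x. \<bar>d x\<bar>) \<le> \<epsilon>"
proof -
  have am_gm: "\<bar>d x\<bar> \<le> (d x)\<^sup>2 / (2 * \<epsilon>) + \<epsilon> / 2" for x
  proof -
    have "2 * \<epsilon> * \<bar>d x\<bar> \<le> (d x)\<^sup>2 + \<epsilon>\<^sup>2"
      using zero_le_power2[of "\<bar>d x\<bar> - \<epsilon>"] by (simp add: power2_eq_square algebra_simps)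
    then show ?thesis using eps by (simp add: field_simps power2_eq_square)
  qed
  have "unif_exp n (\<lambda>x. \<bar>d x\<bar>) \<le> unif_exp n (\<lambda>x. (d x)\<^sup>2 / (2 * \<epsilon>) + \<epsilon> / 2)"
    unfolding unif_exp_def by (intro divide_right_mono sum_mono am_gm) simp
  also have "\<dots> = unif_exp n (\<lambda>x. (d x)\<^sup>2) / (2 * \<epsilon>) + \<epsilon> / 2"
    by (simp add: unif_exp_def sum.distrib sum_divide_distrib card_cube add_divide_distrib ac_simps)
  also have "\<dots> \<le> \<epsilon>\<^sup>2 / (2 * \<epsilon>) + \<epsilon> / 2"
    using sq eps by (simp add: divide_right_mono)
  also have "\<dots> = \<epsilon>"
    using eps by (simp add: field_simps power2_eq_square)
  finally show ?thesis .
qed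

lemma mu_bounds: "wf_sdt n t \<Longrightarrow> 0 \<le> mu t x \<and> mu t x \<le> 1"
proof (induction t)
  case (Stoch p l r)
  then have "p * mu l x + (1 - p) * mu r x \<le> p * 1 + (1 - p) * 1"
    by (intro add_mono mult_left_mono) auto
  with Stoch show ?case by auto
qed auto

lemma sdt_size_ge_1: "1 \<le> sdt_size t"
  by (induction t) auto

lemma sdt_size_eq_1_imp_leaf: "sdt_size t = 1 \<Longrightarrow> \<exists>b. t = Leaf b"
proof (cases t)
  case (Query i l r)
  then show "sdt_size t = 1 \<Longrightarrow> ?thesis" using sdt_size_ge_1[of l] sdt_size_ge_1[of r] by simp
next
  case (Stoch p l r)
  then show "sdt_size t = 1 \<Longrightarrow> ?thesis" using sdt_size_ge_1[of l] sdt_size_ge_1[of r] by simp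
qed simp

fun deterministic :: "sdt \<Rightarrow> bool" where
  "deterministic (Leaf b) = True"
| "deterministic (Query i l r) = (deterministic l \<and> deterministic r)"
| "deterministic (Stoch p l r) = False"

text \<open>The deterministic trees obtained by fixing the outcome of every stochastic node,
  weighted by the probability of that choice.\<close>

fun det_mixture :: "sdt \<Rightarrow> (real \<times> sdt) list" where
  "det_mixture (Leaf b) = [(1, Leaf b)]"
| "det_mixture (Query i l r) =
     concat (map (\<lambda>(p, a). map (\<lambda>(q, b). (p * q, Query i a b)) (det_mixture r)) (det_mixture l))"
| "det_mixture (Stoch p l r) =
     map (\<lambda>(w, a). (p * w, a)) (det_mixture l) @ map (\<lambda>(w, a). ((1 - p) * w, a)) (det_mixture r)"

lemma det_mixture_total: "wexp (det_mixture T) (\<lambda>_. 1) = 1"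
  by (induction T) (simp_all add: wexp_product wexp_scale_weights)

lemma det_mixture_mu: "wexp (det_mixture T) (\<lambda>t. mu t x) = mu T x"
proof (induction T)
  case (Query i l r)
  have "wexp (det_mixture (Query i l r)) (\<lambda>t. mu t x) =
      wexp (det_mixture l) (\<lambda>a. wexp (det_mixture r) (\<lambda>b. if x ! i then mu b x else mu a x))"
    by (simp add: wexp_product)
  also have "\<dots> = (if x ! i then mu r x else mu l x)"
    using Query by (cases "x ! i"; simp; subst wexp_const; simp add: det_mixture_total)
  finally show ?case by simp
qed (simp_all add: wexp_scale_weights)

lemma det_mixture_support:
  "wf_sdt n T \<Longrightarrow> \<forall>y\<in>set (det_mixture T).
     0 \<le> fst y \<and> deterministic (snd y) \<and> wf_sdt n (snd y) \<and> sdt_size (snd y) \<le> sdt_size T"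
proof (induction T)
  case (Query i l r)
  then show ?case by (fastforce intro: add_mono)
next
  case (Stoch p l r)
  then show ?case by fastforce
qed simp

text \<open>The equation for \<open>Stoch\<close> only makes it total: the trees in \<open>ts\<close> are
  meant to be deterministic.\<close>

function average_tree :: "real \<Rightarrow> real \<Rightarrow> sdt list \<Rightarrow> sdt" where
  "average_tree k a [] = Stoch (a / k) (Leaf True) (Leaf False)"
| "average_tree k a (Leaf b # ts) = average_tree k (a + (if b then 1 else 0)) ts"
| "average_tree k a (Query i l r # ts) =
     Query i (average_tree k a (l # ts)) (average_tree k a (r # ts))"
| "average_tree k a (Stoch p l r # ts) = average_tree k a (l # ts)"
  by pat_completeness auto
termination
  by (relation "measure (\<lambda>(k, a, ts). sum_list (map size ts) + length ts)") auto

lemma mu_average_tree: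
  "\<forall>t\<in>set ts. deterministic t \<Longrightarrow>
     mu (average_tree k a ts) x = (a + sum_list (map (\<lambda>t. mu t x) ts)) / k"
  by (induction k a ts rule: average_tree.induct) (auto simp: add_divide_distrib add.assoc)

lemma stoch_leaf_average_tree: "stoch_leaf (average_tree k a ts)"
  by (induction k a ts rule: average_tree.induct) auto

lemma wf_average_tree:
  "\<forall>t\<in>set ts. deterministic t \<and> wf_sdt n t \<Longrightarrow> 0 \<le> a \<Longrightarrow> a + real (length ts) \<le> k \<Longrightarrow>
     wf_sdt n (average_tree k a ts)"
  by (induction k a ts rule: average_tree.induct) (auto simp: divide_le_eq_1)

lemma sdt_size_average_tree:
  "\<forall>t\<in>set ts. deterministic t \<Longrightarrow>
     sdt_size (average_tree k a ts) \<le> 2 * prod_list (map sdt_size ts)"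
proof (induction k a ts rule: average_tree.induct)
  case (3 k a i l r ts)
  then have "sdt_size (average_tree k a (Query i l r # ts)) \<le>
      2 * prod_list (map sdt_size (l # ts)) + 2 * prod_list (map sdt_size (r # ts))"
    by simp
  also have "\<dots> = 2 * prod_list (map sdt_size (Query i l r # ts))"
    by (simp add: algebra_simps)
  finally show ?case .
qed auto

lemma prod_list_map_le_power:
  "\<forall>t\<in>set ts. f t \<le> (s :: nat) \<Longrightarrow> prod_list (map f ts) \<le> s ^ length ts"
  by (induction ts) (auto intro: mult_le_mono)

lemma average_of_sampled_trees:
  assumes wf: "wf_sdt n T" and k: "0 < k"
  shows "\<exists>T'. wf_sdt n T' \<and> stoch_leaf T' \<and> sdt_size T' \<le> 2 * sdt_size T ^ k \<and>
    unif_exp n (\<lambda>x. (mu T x - mu T' x)\<^sup>2) \<le> 1 / real k"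
proof -
  let ?D = "det_mixture T"
  have support: "0 \<le> fst y \<and> deterministic (snd y) \<and> wf_sdt n (snd y) \<and>
      sdt_size (snd y) \<le> sdt_size T" if "y \<in> set ?D" for y
    using det_mixture_support[OF wf] that by blast
  have close: "\<bar>mu T x - mu (snd y) x\<bar> \<le> 1" if "y \<in> set ?D" for x y
    using mu_bounds[OF wf, of x] mu_bounds[of n "snd y" x] support[OF that] by auto
  obtain ts where ts: "length ts = k" "set ts \<subseteq> snd ` set ?D"
    "(\<Sum>x\<in>cube n. (real k * mu T x - sum_list (map (\<lambda>t. mu t x) ts))\<^sup>2) \<le> real k * 2 ^ n"
    using greedy_empirical_approximation[of "cube n" ?D "\<lambda>t x. mu t x" "mu T" k]
    by (auto simp: finite_cube card_cube support close det_mixture_total det_mixture_mu)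
  have ts_support: "deterministic t \<and> wf_sdt n t \<and> sdt_size t \<le> sdt_size T" if "t \<in> set ts" for t
    using ts(2) that support by auto
  define T' where "T' = average_tree (real k) 0 ts"
  have "(mu T x - mu T' x)\<^sup>2 = (real k * mu T x - sum_list (map (\<lambda>t. mu t x) ts))\<^sup>2 / (real k)\<^sup>2"
    for x
    using k ts_support by (simp add: T'_def mu_average_tree field_simps)
  then have "unif_exp n (\<lambda>x. (mu T x - mu T' x)\<^sup>2) =
      (\<Sum>x\<in>cube n. (real k * mu T x - sum_list (map (\<lambda>t. mu t x) ts))\<^sup>2) / (real k)\<^sup>2 / 2 ^ n"
    by (simp add: unif_exp_def sum_divide_distrib)
  also have "\<dots> \<le> real k * 2 ^ n / (real k)\<^sup>2 / 2 ^ n"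
    using ts(3) by (intro divide_right_mono) auto
  also have "\<dots> = 1 / real k"
    using k by (simp add: power2_eq_square)
  finally have err: "unif_exp n (\<lambda>x. (mu T x - mu T' x)\<^sup>2) \<le> 1 / real k" .
  have "sdt_size T' \<le> 2 * prod_list (map sdt_size ts)"
    using ts_support by (simp add: T'_def sdt_size_average_tree)
  also have "\<dots> \<le> 2 * sdt_size T ^ k"
    using prod_list_map_le_power[of ts sdt_size "sdt_size T"] ts(1) ts_support by simp
  finally show ?thesis
    using err ts(1) ts_support
    by (intro exI[of _ T']) (auto simp: T'_def stoch_leaf_average_tree intro: wf_average_tree)
qed

lemma double_power_le_powr:
  fixes s k :: nat and e :: real
  assumes s: "2 \<le> s" and e: "2 \<le> e" and k: "real k \<le> e + 1"
  shows "real (2 * s ^ k) \<le> real s powr (2 * e)"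
proof -
  have "2 * s ^ k \<le> s ^ (k + 1)"
    using s by simp
  then have "real (2 * s ^ k) \<le> real s ^ (k + 1)"
    by (metis of_nat_le_iff of_nat_power)
  also have "\<dots> = real s powr real (k + 1)"
    using s by (simp only: powr_realpow)
  also have "\<dots> \<le> real s powr (2 * e)"
    using s e k by (intro powr_mono) auto
  finally show ?thesis .
qed

lemma stoch_leaf_approximation:
  assumes wf: "wf_sdt n T" and s: "2 \<le> sdt_size T" and eps: "0 < \<epsilon>" "\<epsilon> < 1/2"
  shows "\<exists>T'. wf_sdt n T' \<and> stoch_leaf T' \<and>
    real (sdt_size T') \<le> real (sdt_size T) powr (2 / \<epsilon>\<^sup>2) \<and>
    unif_exp n (\<lambda>x. \<bar>mu T x - mu T' x\<bar>) \<le> \<epsilon>"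
proof -
  have inv_eps: "4 < 1 / \<epsilon>\<^sup>2"
    using eps power_strict_mono[of \<epsilon> "1/2" 2] by (simp add: field_simps)
  define k where "k = nat \<lceil>1 / \<epsilon>\<^sup>2\<rceil>"
  have k: "1 / \<epsilon>\<^sup>2 \<le> real k" "real k \<le> 1 / \<epsilon>\<^sup>2 + 1"
    using inv_eps by (simp_all add: k_def)
  obtain T' where T': "wf_sdt n T'" "stoch_leaf T'" "sdt_size T' \<le> 2 * sdt_size T ^ k"
    "unif_exp n (\<lambda>x. (mu T x - mu T' x)\<^sup>2) \<le> 1 / real k"
    using average_of_sampled_trees[OF wf, of k] k inv_eps by auto
  have "real (sdt_size T') \<le> real (2 * sdt_size T ^ k)"
    using T'(3) by (simp only: of_nat_le_iff)
  also have "\<dots> \<le> real (sdt_size T) powr (2 / \<epsilon>\<^sup>2)"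
    using double_power_le_powr[OF s, of "1 / \<epsilon>\<^sup>2" k] inv_eps k by simp
  moreover have "1 / real k \<le> \<epsilon>\<^sup>2"
    using k(1) eps(1) by (simp add: divide_le_eq field_simps)
  ultimately show ?thesis
    using T' eps unif_exp_abs_le_of_square_le[of \<epsilon> n "\<lambda>x. mu T x - mu T' x"] by auto
qed

theorem lemma4:
  shows "\<exists>c::real. c > 0 \<and>
    (\<forall>n T (\<epsilon>::real). wf_sdt n T \<and> 0 < \<epsilon> \<and> \<epsilon> < 1/2 \<longrightarrow>
       (\<exists>T'. wf_sdt n T' \<and> stoch_leaf T' \<and>
          real (sdt_size T') \<le> real (sdt_size T) powr (c / \<epsilon>^2) \<and>
          unif_exp n (\<lambda>x. \<bar>mu T x - mu T' x\<bar>) \<le> \<epsilon>))"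
proof (intro exI[of _ 2] conjI allI impI)
  fix n T and \<epsilon> :: real
  assume "wf_sdt n T \<and> 0 < \<epsilon> \<and> \<epsilon> < 1/2"
  then have wf: "wf_sdt n T" and eps: "0 < \<epsilon>" "\<epsilon> < 1/2" by auto
  show "\<exists>T'. wf_sdt n T' \<and> stoch_leaf T' \<and> real (sdt_size T') \<le> real (sdt_size T) powr (2 / \<epsilon>^2) \<and>
      unif_exp n (\<lambda>x. \<bar>mu T x - mu T' x\<bar>) \<le> \<epsilon>"
  proof (cases "sdt_size T = 1")
    case True
    then obtain b where "T = Leaf b"
      using sdt_size_eq_1_imp_leaf by blast
    then show ?thesis
      using eps by (intro exI[of _ T]) (simp add: unif_exp_def)
  next
    case False
    then have "2 \<le> sdt_size T"
      using sdt_size_ge_1[of T] by linarith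
    then show ?thesis
      using stoch_leaf_approximation[OF wf _ eps] by simp
  qed
qed simp

end
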